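(* Let $\rho\in\mathcal{D}$ be non-singular with $f$ differentiable at $\rho$, let $\varphi(\alpha):=\log\operatorname{tr}\exp[\log\rho-\alpha\nabla f(\rho)]$ and $\Delta:=\lambda_{\max}(\nabla f(\rho))-\lambda_{\min}(\nabla f(\rho))$. Then $\varphi''(\alpha)\le\Delta^2/4$ for all $\alpha\in\mathbb{R}$.
   Context: $\mathcal{D}=\{\rho\in\mathbb{C}^{d\times d}:\rho\succeq0,\ \operatorname{tr}\rho=1\}$; $f$ is a convex function on $d\times d$ Hermitian matrices with Hermitian gradient $\nabla f(\rho)$ w.r.t. $\langle A,B\rangle=\operatorname{tr}(A^{\mathrm H}B)$; $\exp,\log$ are matrix functions; $\lambda_{\max},\lambda_{\min}$ are largest/smallest eigenvalues. *)

theory Defs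
  imports "HOL-Analysis.Analysis"
begin

type_synonym 'n cmat = "complex^'n^'n"

definition adj :: "'n::finite cmat \<Rightarrow> 'n cmat" where
  "adj A = (\<chi> i j. cnj (A $ j $ i))"

definition hermitian :: "'n::finite cmat \<Rightarrow> bool" where
  "hermitian A \<longleftrightarrow> adj A = A"

definition psd :: "'n::finite cmat \<Rightarrow> bool" where
  "psd A \<longleftrightarrow> hermitian A \<and>
     (\<forall>x::complex^'n. Re (\<Sum>i\<in>UNIV. cnj (x $ i) * ((A *v x) $ i)) \<ge> 0)"

definition density :: "'n::finite cmat set" where
  "density = {\<rho>. psd \<rho> \<and> trace \<rho> = 1}"

fun matpow :: "'n::finite cmat \<Rightarrow> nat \<Rightarrow> 'n cmat" where
  "matpow A 0 = mat 1"
| "matpow A (Suc k) = A ** matpow A k"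

definition mexp :: "'n::finite cmat \<Rightarrow> 'n cmat" where
  "mexp A = (\<Sum>k. (1 / fact k) *\<^sub>R matpow A k)"

definition mlog :: "'n::finite cmat \<Rightarrow> 'n cmat" where
  "mlog A = (THE H. hermitian H \<and> mexp H = A)"

definition real_eigenvalues :: "'n::finite cmat \<Rightarrow> real set" where
  "real_eigenvalues A = {l. \<exists>v::complex^'n. v \<noteq> 0 \<and> A *v v = complex_of_real l *s v}"

definition lambda_max :: "'n::finite cmat \<Rightarrow> real" where
  "lambda_max A = Max (real_eigenvalues A)"

definition lambda_min :: "'n::finite cmat \<Rightarrow> real" where
  "lambda_min A = Min (real_eigenvalues A)"

text \<open>Inner product <A,B> = tr(A^H B); on Hermitian matrices it is real, we take its real part.\<close>
definition hs_inner :: "'n::finite cmat \<Rightarrow> 'n cmat \<Rightarrow> real" where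
  "hs_inner A B = Re (trace (adj A ** B))"

end

theory Submission
  imports Defs
begin

(* With H = log rho, the function is phi(a) = log Z(a) with Z(a) = tr exp(H - a G), so
   phi'' = Z''/Z - (Z'/Z)^2.  Differentiating the exponential series termwise and evaluating the
   traces in an orthonormal eigenbasis (s, l_s) of H - a G gives Z = sum_s e^(l_s),
   Z' = - sum_s e^(l_s) <s, G s> and Z'' = sum_(s,t) |<t, G s>|^2 (e^(l_s) - e^(l_t)) / (l_s - l_t).
   A divided difference of exp is at most the arithmetic mean of its two endpoint values, so
   Z'' <= sum_s e^(l_s) |G s|^2.  With the weights p_s = e^(l_s) / Z this bounds phi'' by the
   variance sum_s p_s |G s|^2 - (sum_s p_s <s, G s>)^2, which is at most sum_s p_s |G s - c s|^2
   <= Delta^2 / 4 for c the midpoint of the spectrum of G. *)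

section \<open>The complex inner product and orthonormal bases\<close>

definition cinner :: "complex^'n::finite \<Rightarrow> complex^'n \<Rightarrow> complex" where
  "cinner x y = (\<Sum>i\<in>UNIV. cnj (x$i) * y$i)"

lemma cinner_add_right: "cinner x (y + z) = cinner x y + cinner x z"
  by (simp add: cinner_def distrib_left sum.distrib)

lemma cinner_add_left: "cinner (x + y) z = cinner x z + cinner y z"
  by (simp add: cinner_def distrib_right sum.distrib)

lemma cinner_diff_right: "cinner x (y - z) = cinner x y - cinner x z"
  by (simp add: cinner_def right_diff_distrib sum_subtractf)

lemma cinner_scale_right: "cinner x (c *s y) = c * cinner x y"
  by (simp add: cinner_def sum_distrib_left algebra_simps)

lemma cinner_scale_left: "cinner (c *s x) y = cnj c * cinner x y"
  by (simp add: cinner_def sum_distrib_left algebra_simps)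

lemma cinner_zero_right [simp]: "cinner x 0 = 0"
  by (simp add: cinner_def)

lemma cinner_neg_left: "cinner (- x) y = - cinner x y"
  by (simp add: cinner_def sum_negf)

lemma cinner_neg_right: "cinner x (- y) = - cinner x y"
  by (simp add: cinner_def sum_negf)

lemma cinner_sum_right: "cinner x (\<Sum>s\<in>S. f s) = (\<Sum>s\<in>S. cinner x (f s))"
  by (induction S rule: infinite_finite_induct) (auto simp: cinner_add_right)

lemma cinner_commute: "cinner y x = cnj (cinner x y)"
  by (simp add: cinner_def mult.commute)

lemma Re_cinner_eq_inner: "Re (cinner x y) = inner x y"
  by (simp add: cinner_def inner_vec_def inner_complex_def Re_sum)

lemma cinner_self_eq_norm: "cinner x x = complex_of_real ((norm x)\<^sup>2)"
proof -
  have "cinner x x = complex_of_real (\<Sum>i\<in>UNIV. (cmod (x$i))\<^sup>2)"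
    unfolding cinner_def of_real_sum
    by (rule sum.cong[OF refl], subst complex_norm_square, rule mult.commute)
  thus ?thesis by (simp add: norm_vec_def L2_set_def sum_nonneg)
qed

lemma cinner_self_eq_1_iff: "cinner x x = 1 \<longleftrightarrow> norm x = 1"
proof -
  have "cinner x x = 1 \<longleftrightarrow> (norm x)\<^sup>2 = 1"
    unfolding cinner_self_eq_norm by (metis of_real_eq_1_iff)
  also have "\<dots> \<longleftrightarrow> norm x = 1"
    using norm_ge_zero[of x] by (smt (verit) power2_eq_1_iff)
  finally show ?thesis .
qed

lemma cinner_self_eq_0_iff: "cinner x x = 0 \<longleftrightarrow> x = 0"
  by (simp add: cinner_self_eq_norm del: of_real_power)

lemma scaleR_eq_vector_scalar_mult: "(c::real) *\<^sub>R (x::complex^'n::finite) = complex_of_real c *s x"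
  by (simp add: vec_eq_iff scaleR_conv_of_real[where 'a=complex])

lemma matrix_vector_mult_scale: "(A::complex^'n::finite^'n) *v (c *s x) = c *s (A *v x)"
  by (simp add: vec_eq_iff matrix_vector_mult_def sum_distrib_left algebra_simps)

lemma matrix_vector_mult_sum: "(A::complex^'n::finite^'n) *v (\<Sum>s\<in>S. f s) = (\<Sum>s\<in>S. A *v f s)"
  by (induction S rule: infinite_finite_induct) (auto simp: matrix_vector_right_distrib)

lemma cinner_adj: "cinner (A *v x) y = cinner x (adj A *v y)"
  unfolding cinner_def adj_def matrix_vector_mult_def
  by (simp add: sum_distrib_left sum_distrib_right ac_simps) (rule sum.swap)

lemma hermitian_cinner: "hermitian A \<Longrightarrow> cinner (A *v x) y = cinner x (A *v y)"
  by (simp add: hermitian_def cinner_adj)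

lemma hermitian_cinner_self_real:
  "hermitian A \<Longrightarrow> cinner x (A *v x) = complex_of_real (Re (cinner x (A *v x)))"
  using hermitian_cinner[of A x x] cinner_commute[of x "A *v x"] by (simp add: complex_eq_iff)

lemma hermitian_add: "hermitian A \<Longrightarrow> hermitian B \<Longrightarrow> hermitian (A + B)"
  by (simp add: hermitian_def adj_def vec_eq_iff)

lemma hermitian_uminus: "hermitian A \<Longrightarrow> hermitian (- A)"
  by (simp add: hermitian_def adj_def vec_eq_iff)

lemma hermitian_scaleR: "hermitian A \<Longrightarrow> hermitian ((c::real) *\<^sub>R A)"
  by (simp add: hermitian_def adj_def vec_eq_iff)

definition orthonormal :: "(complex^'n::finite) set \<Rightarrow> bool" where
  "orthonormal S \<longleftrightarrow> finite S \<and> (\<forall>s\<in>S. cinner s s = 1) \<and>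
     (\<forall>s\<in>S. \<forall>t\<in>S. s \<noteq> t \<longrightarrow> cinner s t = 0)"

definition orthonormal_basis :: "(complex^'n::finite) set \<Rightarrow> bool" where
  "orthonormal_basis S \<longleftrightarrow> orthonormal S \<and> (\<forall>x. x = (\<Sum>s\<in>S. cinner s x *s s))"

lemma orthonormal_basis_expansion: "orthonormal_basis S \<Longrightarrow> x = (\<Sum>s\<in>S. cinner s x *s s)"
  by (simp add: orthonormal_basis_def)

lemma orthonormal_basis_orthonormal: "orthonormal_basis S \<Longrightarrow> orthonormal S"
  by (simp add: orthonormal_basis_def)

lemma orthonormal_basis_finite: "orthonormal_basis S \<Longrightarrow> finite S"
  by (simp add: orthonormal_basis_def orthonormal_def)

lemma orthonormal_basis_unit: "orthonormal_basis S \<Longrightarrow> s \<in> S \<Longrightarrow> cinner s s = 1"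
  by (simp add: orthonormal_basis_def orthonormal_def)

lemma orthonormal_coeff:
  assumes "orthonormal S" "t \<in> S"
  shows "cinner t (\<Sum>s\<in>S. c s *s s) = c t"
proof -
  have "cinner t (\<Sum>s\<in>S. c s *s s) = (\<Sum>s\<in>S. c s * cinner t s)"
    by (simp add: cinner_sum_right cinner_scale_right)
  also have "\<dots> = c t * cinner t t"
    using assms unfolding orthonormal_def
    by (subst sum.remove[of S t]) (auto intro!: sum.neutral, metis)
  finally show ?thesis using assms by (simp add: orthonormal_def)
qed

lemma matrix_vector_mult_expansion:
  assumes "orthonormal_basis S"
  shows "(A::complex^'n::finite^'n) *v x = (\<Sum>s\<in>S. cinner s x *s (A *v s))"
  by (subst orthonormal_basis_expansion[OF assms, of x])
     (simp only: matrix_vector_mult_sum matrix_vector_mult_scale)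

lemma matrix_eq_on_basis:
  fixes A B :: "complex^'n::finite^'n"
  assumes "orthonormal_basis S" "\<And>s. s \<in> S \<Longrightarrow> A *v s = B *v s"
  shows "A = B"
proof -
  have "A *v x = B *v x" for x
    unfolding matrix_vector_mult_expansion[OF assms(1), of A x] matrix_vector_mult_expansion[OF assms(1), of B x]
    using assms(2) by simp
  thus ?thesis by (simp add: matrix_eq)
qed

lemma vector_eq_on_basis:
  assumes "orthonormal_basis S" "\<And>s. s \<in> S \<Longrightarrow> cinner s x = cinner s y"
  shows "x = y"
  using orthonormal_basis_expansion[OF assms(1), of x] orthonormal_basis_expansion[OF assms(1), of y]
    assms(2) by (metis (no_types, lifting) sum.cong)

lemma parseval:
  assumes "orthonormal_basis S"
  shows "Re (cinner y y) = (\<Sum>s\<in>S. (cmod (cinner s y))\<^sup>2)"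
proof -
  have "cinner y y = cinner y (\<Sum>s\<in>S. cinner s y *s s)"
    by (subst orthonormal_basis_expansion[OF assms, of y]) rule
  also have "\<dots> = (\<Sum>s\<in>S. complex_of_real ((cmod (cinner s y))\<^sup>2))"
    by (simp add: cinner_sum_right cinner_scale_right cinner_commute[of y] complex_norm_square
        del: of_real_power)
  finally show ?thesis by (simp add: Re_sum)
qed

lemma orthonormal_basis_nonempty:
  assumes "orthonormal_basis (S :: (complex^'n::finite) set)"
  shows "S \<noteq> {}"
proof
  assume "S = {}"
  hence "axis undefined (1::complex) = (0::complex^'n)"
    using orthonormal_basis_expansion[OF assms] by simp
  thus False by (simp add: axis_eq_0_iff)
qed

section \<open>The spectral theorem for Hermitian matrices\<close>

lemma linear_le_quadratic_imp_zero:
  fixes c K :: real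
  assumes "\<And>e. 2 * e * c \<le> e\<^sup>2 * K"
  shows "c = 0"
proof -
  define a where "a = \<bar>K\<bar> + 1"
  have a: "a > 0" "K \<le> a - 1" unfolding a_def by auto
  have "2 * (c / a) * c \<le> (c / a)\<^sup>2 * (a - 1)"
    using assms[of "c / a"] a by (smt (verit) mult_left_mono zero_le_power2)
  hence "c * c * (a + 1) \<le> 0"
    using a by (simp add: power2_eq_square field_simps)
  hence "c * c \<le> 0" using a by (simp add: mult_le_0_iff)
  thus ?thesis by (metis antisym zero_le_square mult_eq_0_iff)
qed

definition complex_subspace :: "(complex^'n::finite) set \<Rightarrow> bool" where
  "complex_subspace W \<longleftrightarrow> subspace W \<and> (\<forall>c x. x \<in> W \<longrightarrow> c *s x \<in> W)"

lemma rayleigh_maximizer_exists: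
  fixes A :: "complex^'n::finite^'n"
  assumes W: "complex_subspace W" and "w \<in> W" "w \<noteq> 0"
  obtains x where "x \<in> W" "norm x = 1"
    "\<And>y. y \<in> W \<Longrightarrow> norm y = 1 \<Longrightarrow> Re (cinner y (A *v y)) \<le> Re (cinner x (A *v x))"
proof -
  define K where "K = W \<inter> sphere 0 1"
  have "compact K"
    unfolding K_def using W by (intro closed_Int_compact closed_subspace) (auto simp: complex_subspace_def)
  moreover have "(1 / norm w) *\<^sub>R w \<in> K"
    using W \<open>w \<in> W\<close> \<open>w \<noteq> 0\<close> by (auto simp: K_def complex_subspace_def subspace_def)
  hence "K \<noteq> {}" by blast
  moreover have "continuous_on K (\<lambda>y. Re (cinner y (A *v y)))"
    unfolding cinner_def matrix_vector_mult_def by (intro continuous_intros)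
  ultimately obtain x where "x \<in> K" "\<forall>y\<in>K. Re (cinner y (A *v y)) \<le> Re (cinner x (A *v x))"
    using continuous_attains_sup by blast
  thus ?thesis using that by (auto simp: K_def)
qed

lemma rayleigh_maximizer_orthogonal:
  fixes A :: "complex^'n::finite^'n"
  defines "q y \<equiv> Re (cinner y (A *v y))"
  assumes herm: "hermitian A" and W: "complex_subspace W"
    and x: "x \<in> W" "norm x = 1" and max: "\<And>y. y \<in> W \<Longrightarrow> norm y = 1 \<Longrightarrow> q y \<le> q x"
    and y: "y \<in> W" "cinner x y = 0"
  shows "cinner y (A *v x) = 0"
proof -
  have add: "u + v \<in> W" if "u \<in> W" "v \<in> W" for u v
    using W that by (auto simp: complex_subspace_def subspace_def)
  have scale: "c *s u \<in> W" if "u \<in> W" for u c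
    using W that by (auto simp: complex_subspace_def)
  have xx: "cinner x x = 1" using x by (simp add: cinner_self_eq_1_iff)
  \<comment> \<open>Maximality of \<open>x\<close> against the normalised vectors \<open>x + e z\<close> forces the term of
    \<open>q (x + e z)\<close> that is linear in \<open>e\<close> to vanish.\<close>
  have Re_zero: "Re (cinner z (A *v x)) = 0" if z: "z \<in> W" "cinner x z = 0" for z
  proof -
    define c where "c = Re (cinner z (A *v x))"
    define r where "r e = 1 + e\<^sup>2 * (norm z)\<^sup>2" for e :: real
    have zx: "cinner z x = 0" using z(2) cinner_commute[of z x] by simp
    have "Re (cinner x (A *v z)) = c"
      using hermitian_cinner[OF herm, of x z] cinner_commute[of z "A *v x"] by (simp add: c_def)
    hence q_sum: "q (x + complex_of_real e *s z) = q x + 2 * e * c + e\<^sup>2 * q z" for e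
      by (simp add: q_def matrix_vector_right_distrib matrix_vector_mult_scale cinner_add_left
          cinner_add_right cinner_scale_left cinner_scale_right c_def power2_eq_square algebra_simps)
    have "2 * e * c \<le> e\<^sup>2 * ((norm z)\<^sup>2 * q x - q z)" for e :: real
    proof -
      define v where "v = x + complex_of_real e *s z"
      have r0: "r e > 0" by (simp add: r_def add_pos_nonneg)
      have "cinner v v = complex_of_real (r e)"
        using cinner_self_eq_norm[of z]
        by (simp add: v_def r_def cinner_add_left cinner_add_right cinner_scale_left
            cinner_scale_right xx zx z(2) power2_eq_square)
      hence "(norm v)\<^sup>2 = r e" using cinner_self_eq_norm[of v] by (metis of_real_eq_iff)
      hence norm_v: "norm v = sqrt (r e)" using real_sqrt_unique[of "norm v" "r e"] by simp
      have "v \<in> W" unfolding v_def using x z by (intro add scale)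
      define u where "u = complex_of_real (1 / sqrt (r e)) *s v"
      have "u \<in> W" unfolding u_def using \<open>v \<in> W\<close> by (rule scale)
      moreover have "norm u = 1"
        using norm_v r0 unfolding u_def scaleR_eq_vector_scalar_mult[symmetric] by simp
      ultimately have "q u \<le> q x" by (rule max)
      moreover have "q u = q v / r e"
        using r0 by (simp add: u_def q_def matrix_vector_mult_scale cinner_scale_left cinner_scale_right
            of_real_mult[symmetric] del: of_real_mult)
      ultimately have "q v \<le> r e * q x" using r0 by (simp add: divide_le_eq mult.commute)
      thus ?thesis unfolding v_def q_sum r_def by (simp add: algebra_simps)
    qed
    thus ?thesis using linear_le_quadratic_imp_zero unfolding c_def by blast
  qed
  have "Re (cinner y (A *v x)) = 0" using Re_zero y by blast
  moreover have "Re (cinner (\<i> *s y) (A *v x)) = 0"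
    using y by (intro Re_zero scale) (auto simp: cinner_scale_right)
  ultimately show ?thesis by (simp add: cinner_scale_left complex_eq_iff)
qed

lemma hermitian_invariant_subspace_eigenvector:
  fixes A :: "complex^'n::finite^'n"
  assumes herm: "hermitian A" and W: "complex_subspace W"
    and inv: "\<And>x. x \<in> W \<Longrightarrow> A *v x \<in> W" and "w \<in> W" "w \<noteq> 0"
  obtains x and l :: real where "x \<in> W" "norm x = 1" "A *v x = complex_of_real l *s x"
proof -
  obtain x where x: "x \<in> W" "norm x = 1"
    and max: "\<And>y. y \<in> W \<Longrightarrow> norm y = 1 \<Longrightarrow> Re (cinner y (A *v y)) \<le> Re (cinner x (A *v x))"
    using rayleigh_maximizer_exists[OF W \<open>w \<in> W\<close> \<open>w \<noteq> 0\<close>] by blast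
  have xx: "cinner x x = 1" using x by (simp add: cinner_self_eq_1_iff)
  define \<mu> where "\<mu> = cinner x (A *v x)"
  define y where "y = A *v x - \<mu> *s x"
  have "y \<in> W"
    using W x inv unfolding y_def complex_subspace_def by (metis subspace_diff)
  moreover have xy: "cinner x y = 0"
    by (simp add: y_def \<mu>_def cinner_diff_right cinner_scale_right xx)
  ultimately have "cinner y (A *v x) = 0"
    using rayleigh_maximizer_orthogonal[OF herm W x max] by blast
  have "cinner y y = cinner y (A *v x) - \<mu> * cinner y x"
    unfolding y_def by (simp only: cinner_diff_right cinner_scale_right)
  also have "\<dots> = 0"
    using \<open>cinner y (A *v x) = 0\<close> xy cinner_commute[of y x] by simp
  finally have "A *v x = \<mu> *s x" by (simp add: cinner_self_eq_0_iff y_def)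
  moreover have "\<mu> = complex_of_real (Re \<mu>)"
    unfolding \<mu>_def by (rule hermitian_cinner_self_real[OF herm])
  ultimately have "A *v x = complex_of_real (Re \<mu>) *s x" by metis
  thus ?thesis using that x by blast
qed

lemma hermitian_orthonormal_eigenbasis:
  fixes A :: "complex^'n::finite^'n"
  assumes herm: "hermitian A"
  shows "\<exists>S. orthonormal_basis S \<and> (\<forall>s\<in>S. \<exists>l::real. A *v s = complex_of_real l *s s)"
proof -
  define P where
    "P S \<longleftrightarrow> orthonormal S \<and> (\<forall>s\<in>S. \<exists>l::real. A *v s = complex_of_real l *s s)" for S
  have bound: "card S \<le> DIM(complex^'n)" if "P S" for S
  proof -
    have "pairwise orthogonal S" "0 \<notin> S"
      using that unfolding P_def pairwise_def orthogonal_def orthonormal_def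
      by (auto simp: Re_cinner_eq_inner[symmetric])
    hence "independent S" by (rule pairwise_orthogonal_independent)
    thus ?thesis by (rule independent_bound[THEN conjunct2])
  qed
  have "P {}" by (simp add: P_def orthonormal_def)
  then obtain S where PS: "P S" and maxS: "\<And>S'. P S' \<Longrightarrow> card S' \<le> card S"
    using ex_has_greatest_nat[of P "{}" card "DIM(complex^'n) + 1"] bound
    by (metis less_Suc_eq_le Suc_eq_plus1)
  have oS: "orthonormal S" and eS: "\<forall>s\<in>S. \<exists>l::real. A *v s = complex_of_real l *s s"
    using PS by (auto simp: P_def)
  define W where "W = {x. \<forall>s\<in>S. cinner s x = 0}"
  have W: "complex_subspace W"
    by (auto simp: complex_subspace_def subspace_def W_def cinner_add_right cinner_scale_right
        scaleR_eq_vector_scalar_mult)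
  have inv: "A *v x \<in> W" if "x \<in> W" for x
  proof -
    have "cinner s (A *v x) = 0" if "s \<in> S" for s
    proof -
      obtain l :: real where "A *v s = complex_of_real l *s s" using eS \<open>s \<in> S\<close> by blast
      thus ?thesis using hermitian_cinner[OF herm, of s x] \<open>x \<in> W\<close> \<open>s \<in> S\<close>
        by (simp add: cinner_scale_left W_def)
    qed
    thus ?thesis by (simp add: W_def)
  qed
  \<comment> \<open>By maximality, the orthogonal complement of S contains no eigenvector, hence is zero.\<close>
  have W0: "w = 0" if "w \<in> W" for w
  proof (rule ccontr)
    assume "w \<noteq> 0"
    then obtain x and l :: real where x: "x \<in> W" "norm x = 1" "A *v x = complex_of_real l *s x"
      using hermitian_invariant_subspace_eigenvector[OF herm W inv \<open>w \<in> W\<close>] by blast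
    have orth: "cinner s x = 0" "cinner x s = 0" if "s \<in> S" for s
      using x(1) that cinner_commute[of x s] by (auto simp: W_def)
    have "P (insert x S)"
      using oS eS x orth cinner_self_eq_1_iff[of x] unfolding P_def orthonormal_def by auto
    hence "card (insert x S) \<le> card S" by (rule maxS)
    moreover have "x \<notin> S" using x cinner_self_eq_1_iff[of x] by (auto simp: W_def)
    ultimately show False using oS by (simp add: orthonormal_def)
  qed
  have "x = (\<Sum>s\<in>S. cinner s x *s s)" for x
    using W0[of "x - (\<Sum>s\<in>S. cinner s x *s s)"] oS
    by (simp add: W_def cinner_diff_right orthonormal_coeff)
  thus ?thesis using oS eS by (auto simp: orthonormal_basis_def)
qed

lemma hermitian_eigenbasisE:
  fixes A :: "complex^'n::finite^'n"
  assumes "hermitian A"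
  obtains S lam where "orthonormal_basis S" "\<And>s. s \<in> S \<Longrightarrow> A *v s = complex_of_real (lam s) *s s"
  using hermitian_orthonormal_eigenbasis[OF assms] by metis

section \<open>Matrix powers and the exponential series\<close>

lemma matrix_mult_diff_ldistrib: "(A::complex^'n::finite^'n) ** (B - C) = A ** B - A ** C"
  by (simp add: vec_eq_iff matrix_matrix_mult_def sum_subtractf algebra_simps)

lemma matrix_mult_diff_rdistrib: "((A::complex^'n::finite^'n) - B) ** C = A ** C - B ** C"
  by (simp add: vec_eq_iff matrix_matrix_mult_def sum_subtractf algebra_simps)

lemma matrix_mult_add_rdistrib: "((A::complex^'n::finite^'n) + B) ** C = A ** C + B ** C"
  by (simp add: vec_eq_iff matrix_matrix_mult_def sum.distrib algebra_simps)

lemma matrix_mult_sum_right: "(X::complex^'n::finite^'n) ** (\<Sum>j\<in>J. F j) = (\<Sum>j\<in>J. X ** F j)"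
  by (induction J rule: infinite_finite_induct) (simp_all add: matrix_add_ldistrib)

lemma matrix_vector_mult_uminus: "(- A) *v x = - ((A::complex^'n::finite^'n) *v x)"
  by (simp add: vec_eq_iff matrix_vector_mult_def sum_negf)

lemma matrix_scaleR_vector_mult: "((c::real) *\<^sub>R (A::complex^'n::finite^'n)) *v x = c *\<^sub>R (A *v x)"
  by (simp add: vec_eq_iff matrix_vector_mult_def scaleR_sum_right)

lemma trace_sum: "trace (\<Sum>j\<in>J. F j) = (\<Sum>j\<in>J. trace (F j :: complex^'n::finite^'n))"
  by (induction J rule: infinite_finite_induct) (simp_all add: trace_add, simp_all add: trace_def)

lemma Re_trace_scaleR: "Re (trace (c *\<^sub>R A)) = c * Re (trace (A::complex^'n::finite^'n))"
  by (simp add: trace_def Re_sum sum_distrib_left)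

lemma bounded_linear_matrix_vector_mult_left:
  "bounded_linear (\<lambda>M::complex^'n::finite^'n. M *v s)"
  unfolding linear_conv_bounded_linear[symmetric]
  by (rule linearI) (simp_all add: matrix_vector_mult_add_rdistrib matrix_scaleR_vector_mult)

lemma bounded_linear_Re_trace_mult_left:
  "bounded_linear (\<lambda>M::complex^'n::finite^'n. Re (trace (Y ** M)))"
  unfolding linear_conv_bounded_linear[symmetric]
  by (rule linearI)
     (simp_all add: matrix_add_ldistrib trace_add matrix_scalar_ac scalar_matrix_assoc[symmetric]
       Re_trace_scaleR)

lemma bounded_bilinear_matrix_mult:
  "bounded_bilinear (\<lambda>(A::complex^'n::finite^'n) B. A ** B)"
  unfolding bilinear_conv_bounded_bilinear[symmetric] bilinear_def
  by (auto intro!: linearI simp: matrix_add_ldistrib matrix_mult_add_rdistrib matrix_scalar_ac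
      scalar_matrix_assoc)

text \<open>The entrywise \<open>\<ell>\<^sub>1\<close> norm; unlike the Euclidean norm of the vector type it is
  submultiplicative.\<close>

definition mnorm :: "complex^'n::finite^'n \<Rightarrow> real" where
  "mnorm A = (\<Sum>i\<in>UNIV. \<Sum>j\<in>UNIV. cmod (A$i$j))"

lemma mnorm_nonneg: "mnorm A \<ge> 0"
  by (simp add: mnorm_def sum_nonneg)

lemma mnorm_add: "mnorm (A + B) \<le> mnorm A + mnorm B"
  unfolding mnorm_def by (simp add: sum.distrib[symmetric] sum_mono norm_triangle_ineq)

lemma mnorm_scaleR: "mnorm (c *\<^sub>R A) = \<bar>c\<bar> * mnorm A"
  unfolding mnorm_def by (simp add: sum_distrib_left)

lemma mnorm_mult: "mnorm (A ** B) \<le> mnorm A * mnorm B"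
proof -
  have "mnorm (A ** B) \<le> (\<Sum>i\<in>UNIV. \<Sum>j\<in>UNIV. \<Sum>k\<in>UNIV. cmod (A$i$k) * cmod (B$k$j))"
    unfolding mnorm_def matrix_matrix_mult_def
    by (auto intro!: sum_mono order_trans[OF norm_sum] simp: norm_mult)
  also have "\<dots> = (\<Sum>i\<in>UNIV. \<Sum>k\<in>UNIV. cmod (A$i$k) * (\<Sum>j\<in>UNIV. cmod (B$k$j)))"
    by (simp add: sum_distrib_left) (rule sum.cong[OF refl], rule sum.swap)
  also have "\<dots> \<le> (\<Sum>i\<in>UNIV. \<Sum>k\<in>UNIV. cmod (A$i$k) * mnorm B)"
    unfolding mnorm_def
    by (intro sum_mono mult_left_mono member_le_sum[of _ UNIV "\<lambda>k. \<Sum>j\<in>UNIV. cmod (B$k$j)"])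
       (auto intro: sum_nonneg)
  also have "\<dots> = mnorm A * mnorm B" by (simp add: mnorm_def sum_distrib_right)
  finally show ?thesis .
qed

lemma mnorm_mult_matpow: "mnorm (Y ** matpow B k) \<le> mnorm Y * mnorm B ^ k"
proof (induction k arbitrary: Y)
  case 0 thus ?case by simp
next
  case (Suc k)
  have "mnorm (Y ** matpow B (Suc k)) = mnorm ((Y ** B) ** matpow B k)"
    by (simp add: matrix_mul_assoc)
  also have "\<dots> \<le> mnorm (Y ** B) * mnorm B ^ k" by (rule Suc.IH)
  also have "\<dots> \<le> (mnorm Y * mnorm B) * mnorm B ^ k"
    by (intro mult_right_mono mnorm_mult) (simp add: mnorm_nonneg)
  finally show ?case by (simp add: algebra_simps)
qed

lemma norm_le_mnorm: "norm A \<le> mnorm A"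
proof -
  have "norm A \<le> (\<Sum>i\<in>UNIV. norm (A$i))" unfolding norm_vec_def by (rule L2_set_le_sum) simp
  also have "\<dots> \<le> mnorm A" unfolding mnorm_def
    by (intro sum_mono) (simp add: norm_vec_def L2_set_le_sum)
  finally show ?thesis .
qed

lemma abs_Re_trace_le_mnorm: "\<bar>Re (trace A)\<bar> \<le> mnorm A"
proof -
  have "\<bar>Re (trace A)\<bar> \<le> (\<Sum>i\<in>UNIV. cmod (A$i$i))"
    unfolding trace_def by (rule order_trans[OF abs_Re_le_cmod norm_sum])
  also have "\<dots> \<le> mnorm A" unfolding mnorm_def by (intro sum_mono member_le_sum) auto
  finally show ?thesis .
qed

lemma mnorm_matpow_diff:
  assumes "mnorm A \<le> R" "mnorm B \<le> R"
  shows "mnorm (matpow A (Suc k) - matpow B (Suc k)) \<le> of_nat (Suc k) * R ^ k * mnorm (A - B)"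
proof (induction k)
  case 0 thus ?case by simp
next
  case (Suc k)
  have R: "R \<ge> 0" using assms mnorm_nonneg order_trans by blast
  have "matpow A (Suc (Suc k)) - matpow B (Suc (Suc k))
     = A ** (matpow A (Suc k) - matpow B (Suc k)) + (A - B) ** matpow B (Suc k)"
    by (simp add: matrix_mult_diff_ldistrib matrix_mult_diff_rdistrib)
  hence "mnorm (matpow A (Suc (Suc k)) - matpow B (Suc (Suc k)))
     \<le> mnorm A * mnorm (matpow A (Suc k) - matpow B (Suc k)) + mnorm (A - B) * mnorm B ^ Suc k"
    by (metis order_trans[OF mnorm_add add_mono[OF mnorm_mult mnorm_mult_matpow]])
  also have "\<dots> \<le> R * (of_nat (Suc k) * R ^ k * mnorm (A - B)) + mnorm (A - B) * R ^ Suc k"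
    using assms R Suc.IH
    by (intro add_mono mult_mono mult_left_mono power_mono) (auto simp: mnorm_nonneg)
  also have "\<dots> = of_nat (Suc (Suc k)) * R ^ Suc k * mnorm (A - B)" by (simp add: algebra_simps)
  finally show ?case .
qed

lemma matpow_add: "matpow M a ** matpow M b = matpow M (a + b)"
  by (induction a) (simp_all add: matrix_mul_assoc[symmetric])

lemma matpow_two: "matpow A 2 = A ** A"
  by (simp add: eval_nat_numeral)

lemma matpow_eigenvector:
  assumes "A *v s = c *s s"
  shows "matpow A k *v s = c ^ k *s s"
proof (induction k)
  case 0 thus ?case by simp
next
  case (Suc k)
  have "matpow A (Suc k) *v s = A *v (matpow A k *v s)" by (simp add: matrix_vector_mul_assoc)
  thus ?case using assms by (simp add: Suc.IH matrix_vector_mult_scale)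
qed

lemma summable_exp_dominated_Suc:
  fixes u :: "nat \<Rightarrow> real"
  assumes "\<And>k. \<bar>u (Suc k)\<bar> \<le> C * (R ^ k / fact k)"
  shows "summable u"
proof -
  have "summable (\<lambda>k. u (Suc k))"
  proof (rule summable_comparison_test')
    show "summable (\<lambda>k. C * (inverse (fact k) * R ^ k))" by (intro summable_mult summable_exp)
    show "norm (u (Suc k)) \<le> C * (inverse (fact k) * R ^ k)" for k
      using assms[of k] by (simp add: field_simps)
  qed
  thus ?thesis by (simp add: summable_Suc_iff)
qed

lemma fact_Suc_cancel: "(of_nat (Suc m) * a) / fact (Suc m) = (a::real) / fact m"
  by simp

lemma summable_mexp: "summable (\<lambda>k. (1 / fact k) *\<^sub>R matpow (A::complex^'n::finite^'n) k)"
proof (rule summable_comparison_test')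
  show "summable (\<lambda>k. mnorm (mat 1 :: complex^'n^'n) * (inverse (fact k) * mnorm A ^ k))"
    by (intro summable_mult summable_exp)
  show "norm ((1 / fact k) *\<^sub>R matpow A k) \<le> mnorm (mat 1 :: complex^'n^'n) * (inverse (fact k) * mnorm A ^ k)"
    for k
    using order_trans[OF norm_le_mnorm mnorm_mult_matpow[of "mat 1" A k]]
    by (simp add: field_simps)
qed

lemma mexp_eigenvector:
  assumes "A *v s = c *s s"
  shows "mexp A *v s = exp c *s s"
proof -
  have bl: "bounded_linear (\<lambda>z::complex. z *s s)"
    by (rule bounded_linear_intro[where K="norm s"])
       (auto simp: vec_eq_iff algebra_simps norm_vec_def norm_mult L2_set_right_distrib)
  have "mexp A *v s = (\<Sum>k. ((1 / fact k) *\<^sub>R matpow A k) *v s)"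
    unfolding mexp_def
    by (rule bounded_linear.suminf[OF bounded_linear_matrix_vector_mult_left summable_mexp])
  also have "\<dots> = (\<Sum>k. (c ^ k /\<^sub>R fact k) *s s)"
    using matpow_eigenvector[OF assms]
    by (intro suminf_cong) (simp add: matrix_scaleR_vector_mult vec_eq_iff
        scaleR_conv_of_real[where 'a=complex] divide_inverse algebra_simps)
  also have "\<dots> = (\<Sum>k. c ^ k /\<^sub>R fact k) *s s"
    by (rule bounded_linear.suminf[OF bl summable_exp_generic, symmetric])
  finally show ?thesis by (simp add: exp_def)
qed

lemma mexp_eigenvector_real:
  "A *v s = complex_of_real l *s s \<Longrightarrow> mexp A *v s = complex_of_real (exp l) *s s"
  by (drule mexp_eigenvector) (simp add: exp_of_real)

lemma sums_Re_trace_mult_mexp: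
  "(\<lambda>k. Re (trace (Y ** matpow M k)) / fact k) sums Re (trace (Y ** mexp M))"
  using bounded_linear.sums[OF bounded_linear_Re_trace_mult_left summable_mexp[THEN summable_sums],
      of Y M]
  by (simp add: mexp_def matrix_scalar_ac scalar_matrix_assoc[symmetric] Re_trace_scaleR)

section \<open>Traces and quadratic forms in an eigenbasis\<close>

lemma orthonormal_basis_completeness:
  assumes "orthonormal_basis S"
  shows "(\<Sum>s\<in>S. cnj (s$i) * s$j) = (if j = i then 1 else 0)"
proof -
  have "axis i (1::complex) $ j = (\<Sum>s\<in>S. cinner s (axis i 1) * s$j)"
    by (subst orthonormal_basis_expansion[OF assms]) (simp add: sum_component)
  moreover have "cinner s (axis i 1) = cnj (s$i)" for s :: "complex^'a"
    unfolding cinner_def axis_def by (simp add: if_distrib cong: if_cong)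
  ultimately show ?thesis by (simp add: axis_def)
qed

lemma trace_eq_sum_basis:
  assumes "orthonormal_basis S"
  shows "trace A = (\<Sum>s\<in>S. cinner s (A *v s))"
proof -
  have "(\<Sum>s\<in>S. cinner s (A *v s)) = (\<Sum>s\<in>S. \<Sum>i\<in>UNIV. \<Sum>j\<in>UNIV. A$i$j * (cnj (s$i) * s$j))"
    unfolding cinner_def matrix_vector_mult_def by (simp add: sum_distrib_left ac_simps)
  also have "\<dots> = (\<Sum>i\<in>UNIV. \<Sum>j\<in>UNIV. A$i$j * (\<Sum>s\<in>S. cnj (s$i) * s$j))"
    by (subst sum.swap) (simp add: sum.swap[of _ S] sum_distrib_left)
  also have "\<dots> = trace A"
    by (simp add: orthonormal_basis_completeness[OF assms] trace_def if_distrib cong: if_cong)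
  finally show ?thesis ..
qed

lemma cinner_matpow_eigenbasis:
  assumes S: "orthonormal_basis S" and eig: "\<And>s. s \<in> S \<Longrightarrow> M *v s = complex_of_real (lam s) *s s"
  shows "cinner y (matpow M j *v y) = (\<Sum>t\<in>S. complex_of_real (lam t ^ j * (cmod (cinner t y))\<^sup>2))"
proof -
  have "matpow M j *v y = (\<Sum>t\<in>S. (cinner t y * complex_of_real (lam t ^ j)) *s t)"
    unfolding matrix_vector_mult_expansion[OF S, of _ y]
    by (intro sum.cong refl) (simp add: matpow_eigenvector[OF eig] vec_eq_iff)
  hence "cinner y (matpow M j *v y) = (\<Sum>t\<in>S. cinner t y * complex_of_real (lam t ^ j) * cinner y t)"
    by (simp add: cinner_sum_right cinner_scale_right mult.commute)
  also have "\<dots> = (\<Sum>t\<in>S. complex_of_real (lam t ^ j * (cmod (cinner t y))\<^sup>2))"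
    by (intro sum.cong refl)
       (simp add: cinner_commute[of y] complex_norm_square mult_ac del: of_real_power)
  finally show ?thesis .
qed

lemma cinner_eigenbasis_mult:
  assumes S: "orthonormal_basis S" and eig: "\<And>s. s \<in> S \<Longrightarrow> M *v s = complex_of_real (lam s) *s s"
    and "s \<in> S"
  shows "cinner s (M *v x) = complex_of_real (lam s) * cinner s x"
proof -
  have "M *v x = (\<Sum>u\<in>S. (cinner u x * complex_of_real (lam u)) *s u)"
    unfolding matrix_vector_mult_expansion[OF S, of M x]
    by (intro sum.cong refl) (simp add: eig vec_eq_iff)
  thus ?thesis
    using orthonormal_coeff[OF orthonormal_basis_orthonormal[OF S] \<open>s \<in> S\<close>] by (simp add: mult.commute)
qed

lemma Re_trace_mult_mexp_eigenbasis:
  assumes S: "orthonormal_basis S" and eig: "\<And>s. s \<in> S \<Longrightarrow> M *v s = complex_of_real (lam s) *s s"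
  shows "Re (trace (Y ** mexp M)) = (\<Sum>s\<in>S. exp (lam s) * Re (cinner s (Y *v s)))"
proof -
  have "cinner s ((Y ** mexp M) *v s) = complex_of_real (exp (lam s)) * cinner s (Y *v s)" if "s \<in> S" for s
    using mexp_eigenvector_real[OF eig[OF that]]
    by (simp add: matrix_vector_mul_assoc[symmetric] matrix_vector_mult_scale cinner_scale_right)
  thus ?thesis by (simp add: trace_eq_sum_basis[OF S] Re_sum)
qed

lemma Re_trace_mexp_eigenbasis:
  assumes S: "orthonormal_basis S" and eig: "\<And>s. s \<in> S \<Longrightarrow> M *v s = complex_of_real (lam s) *s s"
  shows "Re (trace (mexp M)) = (\<Sum>s\<in>S. exp (lam s))"
  using Re_trace_mult_mexp_eigenbasis[OF S eig, of "mat 1"] orthonormal_basis_unit[OF S] by simp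

lemma trace_sandwich_matpow_eigenbasis:
  assumes S: "orthonormal_basis S" and eig: "\<And>s. s \<in> S \<Longrightarrow> M *v s = complex_of_real (lam s) *s s"
    and "hermitian X"
  shows "trace (X ** matpow M j ** X ** matpow M m)
     = (\<Sum>s\<in>S. \<Sum>t\<in>S. complex_of_real ((cmod (cinner t (X *v s)))\<^sup>2 * lam t ^ j * lam s ^ m))"
proof -
  have "cinner s ((X ** matpow M j ** X ** matpow M m) *v s)
      = complex_of_real (lam s ^ m) * cinner (X *v s) (matpow M j *v (X *v s))" if "s \<in> S" for s
    using matpow_eigenvector[OF eig[OF that], of m] hermitian_cinner[OF \<open>hermitian X\<close>, of s]
    by (simp add: matrix_vector_mul_assoc[symmetric] matrix_vector_mult_scale cinner_scale_right)
  thus ?thesis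
    by (simp add: trace_eq_sum_basis[OF S] cinner_matpow_eigenbasis[OF S eig] sum_distrib_left
        mult_ac)
qed

section \<open>Differentiating the trace of the exponential\<close>

definition dmatpow :: "complex^'n::finite^'n \<Rightarrow> complex^'n^'n \<Rightarrow> nat \<Rightarrow> complex^'n^'n" where
  "dmatpow M X k = (\<Sum>j<k. matpow M j ** X ** matpow M (k - 1 - j))"

lemma dmatpow_0 [simp]: "dmatpow M X 0 = 0"
  by (simp add: dmatpow_def)

lemma dmatpow_Suc: "dmatpow M X (Suc k) = X ** matpow M k + M ** dmatpow M X k"
proof -
  have "dmatpow M X (Suc k) = X ** matpow M k + (\<Sum>j<k. matpow M (Suc j) ** X ** matpow M (k - 1 - j))"
    unfolding dmatpow_def by (subst sum.lessThan_Suc_shift) simp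
  thus ?thesis by (simp add: dmatpow_def matrix_mult_sum_right matrix_mul_assoc)
qed

lemma has_vector_derivative_matpow:
  "((\<lambda>t. matpow (B + t *\<^sub>R X) k) has_vector_derivative dmatpow (B + t *\<^sub>R X) X k) (at t)"
proof (induction k)
  case 0 thus ?case by (simp add: has_vector_derivative_const)
next
  case (Suc k)
  have "((\<lambda>t. B + t *\<^sub>R X) has_vector_derivative X) (at t)"
    by (auto intro!: derivative_eq_intros)
  from bounded_bilinear.has_vector_derivative[OF bounded_bilinear_matrix_mult this Suc.IH]
  show ?case by (simp add: dmatpow_Suc add.commute)
qed

lemma trace_dmatpow: "trace (dmatpow M X (Suc k)) = of_nat (Suc k) * trace (X ** matpow M k)"
proof -
  have "trace (matpow M j ** X ** matpow M (k - j)) = trace (X ** matpow M k)" if "j \<le> k" for j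
  proof -
    have "trace (matpow M j ** X ** matpow M (k - j)) = trace (X ** (matpow M (k - j) ** matpow M j))"
      by (metis trace_mul_sym matrix_mul_assoc)
    thus ?thesis using that by (simp add: matpow_add)
  qed
  hence "trace (dmatpow M X (Suc k)) = (\<Sum>j<Suc k. trace (X ** matpow M k))"
    unfolding dmatpow_def trace_sum by (intro sum.cong) auto
  thus ?thesis by simp
qed

lemma mnorm_dmatpow: "mnorm (dmatpow M X (Suc k)) \<le> of_nat (Suc k) * mnorm M ^ k * mnorm X"
proof (induction k)
  case 0 thus ?case by (simp add: dmatpow_Suc)
next
  case (Suc k)
  have "mnorm (dmatpow M X (Suc (Suc k))) \<le> mnorm (X ** matpow M (Suc k)) + mnorm (M ** dmatpow M X (Suc k))"
    unfolding dmatpow_Suc[of M X "Suc k"] by (rule mnorm_add)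
  also have "\<dots> \<le> mnorm X * mnorm M ^ Suc k + mnorm M * (of_nat (Suc k) * mnorm M ^ k * mnorm X)"
    by (intro add_mono mnorm_mult_matpow order_trans[OF mnorm_mult] mult_left_mono Suc.IH mnorm_nonneg)
  also have "\<dots> = of_nat (Suc (Suc k)) * mnorm M ^ Suc k * mnorm X" by (simp add: algebra_simps)
  finally show ?case .
qed

lemma abs_Re_trace_mult_dmatpow_le:
  "\<bar>Re (trace (Y ** dmatpow M X (Suc k)))\<bar> / fact (Suc k) \<le> mnorm Y * mnorm X * (mnorm M ^ k / fact k)"
proof -
  have "\<bar>Re (trace (Y ** dmatpow M X (Suc k)))\<bar> / fact (Suc k) \<le> mnorm (Y ** dmatpow M X (Suc k)) / fact (Suc k)"
    by (simp add: divide_right_mono abs_Re_trace_le_mnorm)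
  also have "\<dots> \<le> mnorm Y * (of_nat (Suc k) * mnorm M ^ k * mnorm X) / fact (Suc k)"
    by (intro divide_right_mono order_trans[OF mnorm_mult] mult_left_mono mnorm_dmatpow mnorm_nonneg)
       simp
  also have "\<dots> = of_nat (Suc k) * (mnorm Y * mnorm X * mnorm M ^ k) / fact (Suc k)"
    by (simp only: ac_simps)
  finally show ?thesis by (simp only: fact_Suc_cancel) simp
qed

lemma Re_trace_mult_matpow_lipschitz:
  assumes "mnorm (B + x *\<^sub>R X) \<le> R" "mnorm (B + y *\<^sub>R X) \<le> R"
  shows "\<bar>Re (trace (Y ** matpow (B + x *\<^sub>R X) (Suc m))) - Re (trace (Y ** matpow (B + y *\<^sub>R X) (Suc m)))\<bar>
           / fact (Suc m) \<le> mnorm Y * mnorm X * (R ^ m / fact m) * \<bar>x - y\<bar>"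
proof -
  let ?D = "matpow (B + x *\<^sub>R X) (Suc m) - matpow (B + y *\<^sub>R X) (Suc m)"
  have "(B + x *\<^sub>R X) - (B + y *\<^sub>R X) = (x - y) *\<^sub>R X" by (simp add: scaleR_diff_left)
  hence "mnorm ?D \<le> of_nat (Suc m) * R ^ m * (\<bar>x - y\<bar> * mnorm X)"
    using mnorm_matpow_diff[OF assms, of m] by (simp add: mnorm_scaleR)
  hence "mnorm (Y ** ?D) \<le> mnorm Y * (of_nat (Suc m) * R ^ m * (\<bar>x - y\<bar> * mnorm X))"
    by (intro order_trans[OF mnorm_mult] mult_left_mono mnorm_nonneg)
  moreover have "\<bar>Re (trace (Y ** matpow (B + x *\<^sub>R X) (Suc m))) - Re (trace (Y ** matpow (B + y *\<^sub>R X) (Suc m)))\<bar>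
      \<le> mnorm (Y ** ?D)"
    using abs_Re_trace_le_mnorm[of "Y ** ?D"] by (simp add: matrix_mult_diff_ldistrib trace_sub)
  ultimately have "\<bar>Re (trace (Y ** matpow (B + x *\<^sub>R X) (Suc m))) - Re (trace (Y ** matpow (B + y *\<^sub>R X) (Suc m)))\<bar>
      / fact (Suc m) \<le> of_nat (Suc m) * (mnorm Y * mnorm X * R ^ m * \<bar>x - y\<bar>) / fact (Suc m)"
    by (intro divide_right_mono) (simp_all only: ac_simps, simp)
  thus ?thesis by (simp only: fact_Suc_cancel) simp
qed

text \<open>Termwise differentiation of the exponential series, justified by a Lipschitz bound on the
  terms that is uniform on a neighbourhood of the point.\<close>

lemma has_real_derivative_Re_trace_mult_mexp:
  fixes B X Y :: "complex^'n::finite^'n"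
  shows "((\<lambda>t. Re (trace (Y ** mexp (B + t *\<^sub>R X)))) has_real_derivative
           (\<Sum>k. Re (trace (Y ** dmatpow (B + x0 *\<^sub>R X) X k)) / fact k)) (at x0)"
proof -
  define f where "f x k = Re (trace (Y ** matpow (B + x *\<^sub>R X) k)) / fact k" for x k
  define f' where "f' x k = Re (trace (Y ** dmatpow (B + x *\<^sub>R X) X k)) / fact k" for x k
  define R where "R = mnorm B + (\<bar>x0\<bar> + 1) * mnorm X"
  define L where "L k = (case k of 0 \<Rightarrow> 0 | Suc m \<Rightarrow> mnorm Y * mnorm X * (R ^ m / fact m))" for k
  have R: "mnorm (B + x *\<^sub>R X) \<le> R" if "x \<in> {x0 - 1<..<x0 + 1}" for x
  proof -
    have "\<bar>x\<bar> * mnorm X \<le> (\<bar>x0\<bar> + 1) * mnorm X" using that by (intro mult_right_mono mnorm_nonneg) auto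
    thus ?thesis using mnorm_add[of B "x *\<^sub>R X"] unfolding R_def mnorm_scaleR by linarith
  qed
  have "(\<lambda>x. suminf (f x)) = (\<lambda>t. Re (trace (Y ** mexp (B + t *\<^sub>R X))))"
    by (rule ext) (simp add: f_def[abs_def] sums_unique[OF sums_Re_trace_mult_mexp])
  moreover have "DERIV (\<lambda>x. suminf (f x)) x0 :> suminf (f' x0)"
  proof (rule DERIV_series'[where a="x0 - 1" and b="x0 + 1" and L=L])
    show "DERIV (\<lambda>x. f x k) x0 :> f' x0 k" for k
      using bounded_linear.has_vector_derivative[OF bounded_linear_Re_trace_mult_left[of Y]
          has_vector_derivative_matpow[of B X k x0]]
      unfolding f_def f'_def has_real_derivative_iff_has_vector_derivative[symmetric]
      by (rule DERIV_cdivide)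
    show "summable (f x)" for x
      unfolding f_def[abs_def] by (rule sums_summable[OF sums_Re_trace_mult_mexp])
    show "x0 \<in> {x0 - 1<..<x0 + 1}" by simp
    show "summable (f' x0)"
      by (rule summable_exp_dominated_Suc[where C="mnorm Y * mnorm X" and R="mnorm (B + x0 *\<^sub>R X)"])
         (unfold f'_def abs_divide abs_of_nonneg[OF fact_ge_zero], rule abs_Re_trace_mult_dmatpow_le)
    show "summable L"
      by (rule summable_exp_dominated_Suc[where C="mnorm Y * mnorm X" and R=R])
         (simp add: L_def R_def mnorm_nonneg)
    show "\<bar>f x k - f y k\<bar> \<le> L k * \<bar>x - y\<bar>"
      if "x \<in> {x0 - 1<..<x0 + 1}" "y \<in> {x0 - 1<..<x0 + 1}" for k x y
      using Re_trace_mult_matpow_lipschitz[OF R[OF that(1)] R[OF that(2)], of Y]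
      by (cases k) (simp_all add: f_def L_def diff_divide_distrib[symmetric] abs_divide)
  qed
  ultimately show ?thesis unfolding f'_def by simp
qed

lemma has_real_derivative_Re_trace_mexp:
  fixes B X :: "complex^'n::finite^'n"
  shows "((\<lambda>t. Re (trace (mexp (B + t *\<^sub>R X)))) has_real_derivative
           Re (trace (X ** mexp (B + x0 *\<^sub>R X)))) (at x0)"
proof -
  let ?M = "B + x0 *\<^sub>R X"
  have "Re (trace (dmatpow ?M X (Suc k))) / fact (Suc k) = Re (trace (X ** matpow ?M k)) / fact k" for k
    by (simp add: trace_dmatpow)
  hence "(\<lambda>k. Re (trace (dmatpow ?M X (Suc k))) / fact (Suc k)) sums Re (trace (X ** mexp ?M))"
    using sums_Re_trace_mult_mexp[of X ?M] by simp
  hence "(\<Sum>k. Re (trace (dmatpow ?M X k)) / fact k) = Re (trace (X ** mexp ?M))"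
    by (subst (asm) sums_Suc_iff) (simp add: sums_unique[symmetric] trace_def)
  thus ?thesis using has_real_derivative_Re_trace_mult_mexp[of "mat 1" B X x0] by simp
qed

section \<open>The divided difference of the exponential\<close>

definition pow_divdiff :: "nat \<Rightarrow> real \<Rightarrow> real \<Rightarrow> real" where
  "pow_divdiff k a b = (\<Sum>i<k. b ^ (k - Suc i) * a ^ i)"

definition exp_divdiff :: "real \<Rightarrow> real \<Rightarrow> real" where
  "exp_divdiff a b = (\<Sum>k. pow_divdiff k a b / fact k)"

lemma pow_divdiff_mult_diff: "(a - b) * pow_divdiff k a b = a ^ k - b ^ k"
  by (simp add: pow_divdiff_def power_diff_sumr2)

lemma pow_divdiff_same: "pow_divdiff (Suc k) a a = of_nat (Suc k) * a ^ k"
  by (simp add: pow_divdiff_def power_add[symmetric])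

lemma sums_exp_real: "(\<lambda>k. a ^ k / fact k) sums exp (a::real)"
  using exp_converges[of a] by (simp add: divide_inverse mult.commute)

lemma summable_exp_divdiff:
  fixes a b :: real
  shows "summable (\<lambda>k. pow_divdiff k a b / fact k)"
proof (rule summable_exp_dominated_Suc[where C=1 and R="max \<bar>a\<bar> \<bar>b\<bar>"])
  fix k
  let ?R = "max \<bar>a\<bar> \<bar>b\<bar>"
  have "\<bar>pow_divdiff (Suc k) a b\<bar> \<le> (\<Sum>i<Suc k. ?R ^ k)"
    unfolding pow_divdiff_def
  proof (rule order_trans[OF sum_abs sum_mono])
    fix i assume "i \<in> {..<Suc k}"
    hence "k - i + i = k" by auto
    have "\<bar>b ^ (Suc k - Suc i) * a ^ i\<bar> \<le> ?R ^ (Suc k - Suc i) * ?R ^ i"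
      unfolding abs_mult power_abs by (intro mult_mono power_mono) auto
    also have "\<dots> = ?R ^ k" by (simp add: power_add[symmetric] \<open>k - i + i = k\<close>)
    finally show "\<bar>b ^ (Suc k - Suc i) * a ^ i\<bar> \<le> ?R ^ k" .
  qed
  hence "\<bar>pow_divdiff (Suc k) a b / fact (Suc k)\<bar> \<le> of_nat (Suc k) * ?R ^ k / fact (Suc k)"
    by (simp add: abs_divide divide_right_mono del: fact_Suc)
  thus "\<bar>pow_divdiff (Suc k) a b / fact (Suc k)\<bar> \<le> 1 * (?R ^ k / fact k)"
    by (simp only: fact_Suc_cancel)
qed

lemma exp_divdiff_same: "exp_divdiff a a = exp a"
proof -
  have "(\<lambda>k. pow_divdiff (Suc k) a a / fact (Suc k)) sums exp a"
    using sums_exp_real[of a] by (simp only: pow_divdiff_same fact_Suc_cancel)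
  thus ?thesis
    unfolding exp_divdiff_def by (subst (asm) sums_Suc_iff) (simp add: sums_iff pow_divdiff_def)
qed

lemma exp_divdiff_mult_diff: "(a - b) * exp_divdiff a b = exp a - exp b"
proof -
  have "(\<lambda>k. (a - b) * (pow_divdiff k a b / fact k)) sums (exp a - exp b)"
    using sums_diff[OF sums_exp_real[of a] sums_exp_real[of b]]
    by (simp only: times_divide_eq_right pow_divdiff_mult_diff diff_divide_distrib)
  thus ?thesis
    unfolding exp_divdiff_def suminf_mult[OF summable_exp_divdiff, symmetric] by (simp add: sums_iff)
qed

lemma tanh_half_le: "(d::real) \<ge> 0 \<Longrightarrow> 2 * (exp d - 1) \<le> d * (exp d + 1)"
proof -
  assume "d \<ge> 0"
  define g where "g x = x * (exp x + 1) - 2 * (exp x - 1)" for x :: real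
  have "g 0 \<le> g d"
  proof (rule DERIV_nonneg_imp_nondecreasing[OF \<open>d \<ge> 0\<close>])
    fix x :: real
    have "DERIV g x :> (exp x + 1) + x * exp x - 2 * exp x"
      unfolding g_def by (auto intro!: derivative_eq_intros)
    moreover have "exp x * (1 - x) \<le> exp x * exp (- x)"
      using exp_ge_add_one_self[of "- x"] by (intro mult_left_mono) auto
    hence "(exp x + 1) + x * exp x - 2 * exp x \<ge> 0" by (simp add: exp_minus algebra_simps)
    ultimately show "\<exists>y. DERIV g x :> y \<and> y \<ge> 0" by blast
  qed
  thus ?thesis by (simp add: g_def)
qed

lemma exp_divdiff_le_mean: "exp_divdiff a b \<le> (exp a + exp b) / 2"
proof -
  have main: "exp_divdiff a b \<le> (exp a + exp b) / 2" if "b < a" for a b :: real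
  proof -
    define d where "d = a - b"
    have "d > 0" using that by (simp add: d_def)
    have "exp b * (2 * (exp d - 1)) \<le> exp b * (d * (exp d + 1))"
      using tanh_half_le[of d] \<open>d > 0\<close> by (intro mult_left_mono) auto
    moreover have "exp a = exp b * exp d" by (simp add: d_def exp_add[symmetric])
    ultimately have "2 * (exp a - exp b) \<le> d * (exp a + exp b)" by (simp add: algebra_simps)
    hence "d * (2 * exp_divdiff a b) \<le> d * (exp a + exp b)"
      using exp_divdiff_mult_diff[of a b] by (simp add: d_def algebra_simps)
    thus ?thesis using \<open>d > 0\<close> by simp
  qed
  have "exp_divdiff a b = exp_divdiff b a"
  proof (cases "a = b")
    case False
    hence "a - b \<noteq> 0" by simp
    thus ?thesis
      using exp_divdiff_mult_diff[of a b] exp_divdiff_mult_diff[of b a]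
      by (metis minus_diff_eq mult_minus_left mult_cancel_left)
  qed simp
  thus ?thesis
    using main[of b a] main[of a b] exp_divdiff_same[of a] by (cases a b rule: linorder_cases) auto
qed

section \<open>The second derivative of the log-partition function\<close>

lemma Re_trace_mult_dmatpow_eigenbasis:
  assumes S: "orthonormal_basis S" and eig: "\<And>s. s \<in> S \<Longrightarrow> M *v s = complex_of_real (lam s) *s s"
    and "hermitian X"
  shows "Re (trace (X ** dmatpow M X k)) = (\<Sum>s\<in>S. \<Sum>t\<in>S. (cmod (cinner t (X *v s)))\<^sup>2 *
           pow_divdiff k (lam t) (lam s))"
proof -
  have "X ** dmatpow M X k = (\<Sum>j<k. X ** matpow M j ** X ** matpow M (k - Suc j))"
    by (simp add: dmatpow_def matrix_mult_sum_right matrix_mul_assoc)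
  hence "Re (trace (X ** dmatpow M X k)) = (\<Sum>j<k. \<Sum>s\<in>S. \<Sum>t\<in>S.
           (cmod (cinner t (X *v s)))\<^sup>2 * lam t ^ j * lam s ^ (k - Suc j))"
    by (simp add: trace_sum trace_sandwich_matpow_eigenbasis[OF S eig \<open>hermitian X\<close>] Re_sum)
  also have "\<dots> = (\<Sum>s\<in>S. \<Sum>t\<in>S. \<Sum>j<k. (cmod (cinner t (X *v s)))\<^sup>2 * lam t ^ j * lam s ^ (k - Suc j))"
    by (subst sum.swap) (simp add: sum.swap[of _ "{..<k}"])
  finally show ?thesis by (simp add: pow_divdiff_def sum_distrib_left mult_ac)
qed

text \<open>Summing the previous formula over \<open>k\<close> produces the divided differences of \<open>exp\<close>;
  bounding them by arithmetic means and using the symmetry of \<open>|\<langle>t, X s\<rangle>|\<^sup>2\<close> in \<open>s, t\<close>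
  leaves \<open>\<Sum>\<^sub>s e\<^sup>\<lambda>\<^sup>s \<parallel>X s\<parallel>\<^sup>2\<close>.\<close>

lemma suminf_Re_trace_mult_dmatpow_le:
  assumes S: "orthonormal_basis S" and eig: "\<And>s. s \<in> S \<Longrightarrow> M *v s = complex_of_real (lam s) *s s"
    and hX: "hermitian X"
  shows "(\<Sum>k. Re (trace (X ** dmatpow M X k)) / fact k)
           \<le> (\<Sum>s\<in>S. exp (lam s) * Re (cinner (X *v s) (X *v s)))"
proof -
  define w where "w s t = (cmod (cinner t (X *v s)))\<^sup>2" for s t
  have w_sym: "w s t = w t s" for s t
  proof -
    have "cinner t (X *v s) = cnj (cinner s (X *v t))"
      using hermitian_cinner[OF hX, of t s] cinner_commute[of "X *v t" s] by simp
    thus ?thesis by (simp add: w_def)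
  qed
  have "(\<Sum>k. Re (trace (X ** dmatpow M X k)) / fact k)
      = (\<Sum>k. \<Sum>s\<in>S. \<Sum>t\<in>S. w s t * (pow_divdiff k (lam t) (lam s) / fact k))"
    by (simp add: Re_trace_mult_dmatpow_eigenbasis[OF S eig hX] w_def sum_divide_distrib)
  also have "\<dots> = (\<Sum>s\<in>S. \<Sum>t\<in>S. w s t * exp_divdiff (lam t) (lam s))"
  proof -
    have "summable (\<lambda>k. w s t * (pow_divdiff k (lam t) (lam s) / fact k))" for s t
      by (intro summable_mult summable_exp_divdiff)
    hence "(\<Sum>k. \<Sum>s\<in>S. \<Sum>t\<in>S. w s t * (pow_divdiff k (lam t) (lam s) / fact k))
        = (\<Sum>s\<in>S. \<Sum>t\<in>S. \<Sum>k. w s t * (pow_divdiff k (lam t) (lam s) / fact k))"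
      by (simp only: suminf_sum summable_sum)
    thus ?thesis unfolding exp_divdiff_def by (simp only: suminf_mult[OF summable_exp_divdiff])
  qed
  also have "\<dots> \<le> (\<Sum>s\<in>S. \<Sum>t\<in>S. w s t * ((exp (lam t) + exp (lam s)) / 2))"
    by (intro sum_mono mult_left_mono exp_divdiff_le_mean) (simp add: w_def)
  also have "\<dots> = ((\<Sum>s\<in>S. \<Sum>t\<in>S. w t s * exp (lam s)) + (\<Sum>s\<in>S. \<Sum>t\<in>S. w s t * exp (lam s))) / 2"
    by (subst (2) sum.swap) (simp add: distrib_left sum.distrib add_divide_distrib sum_divide_distrib)
  also have "\<dots> = (\<Sum>s\<in>S. exp (lam s) * (\<Sum>t\<in>S. w s t))"
    by (simp add: w_sym sum_distrib_left mult.commute)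
  also have "\<dots> = (\<Sum>s\<in>S. exp (lam s) * Re (cinner (X *v s) (X *v s)))"
    by (simp add: parseval[OF S] w_def)
  finally show ?thesis .
qed

lemma Re_trace_mexp_pos:
  assumes "hermitian M"
  shows "Re (trace (mexp M)) > 0"
proof -
  obtain S lam where S: "orthonormal_basis S" and eig: "\<And>s. s \<in> S \<Longrightarrow> M *v s = complex_of_real (lam s) *s s"
    using hermitian_eigenbasisE[OF assms] by blast
  have "finite S" "S \<noteq> {}"
    using orthonormal_basis_finite[OF S] orthonormal_basis_nonempty[OF S] by auto
  thus ?thesis by (simp add: Re_trace_mexp_eigenbasis[OF S eig] sum_pos)
qed

lemma deriv_deriv_ln:
  fixes Z Z' Z'' :: "real \<Rightarrow> real"
  assumes "\<And>a. (Z has_real_derivative Z' a) (at a)" "\<And>a. (Z' has_real_derivative Z'' a) (at a)"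
    and "\<And>a. Z a > 0"
  shows "deriv (deriv (\<lambda>a. ln (Z a))) x = (Z'' x * Z x - Z' x * Z' x) / (Z x * Z x)"
proof -
  have "((\<lambda>a. ln (Z a)) has_real_derivative Z' a / Z a) (at a)" for a
    using DERIV_chain2[OF DERIV_ln[OF assms(3)[of a]] assms(1)] by (simp add: divide_inverse mult.commute)
  hence "deriv (\<lambda>a. ln (Z a)) = (\<lambda>a. Z' a / Z a)" using DERIV_imp_deriv by blast
  moreover have "((\<lambda>a. Z' a / Z a) has_real_derivative (Z'' x * Z x - Z' x * Z' x) / (Z x * Z x)) (at x)"
    using DERIV_divide[OF assms(2) assms(1)] assms(3)[of x] by simp
  ultimately show ?thesis using DERIV_imp_deriv by metis
qed

lemma weighted_variance_le:
  fixes p e m :: "'a \<Rightarrow> real"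
  assumes "finite S" "S \<noteq> {}" "\<And>s. s \<in> S \<Longrightarrow> p s > 0"
    and "\<And>s. s \<in> S \<Longrightarrow> e s - b * m s + (b / 2)\<^sup>2 \<le> D"
  shows "((\<Sum>s\<in>S. p s * e s) * (\<Sum>s\<in>S. p s) - (\<Sum>s\<in>S. p s * m s)\<^sup>2) / (\<Sum>s\<in>S. p s)\<^sup>2 \<le> D"
proof -
  define Z where "Z = (\<Sum>s\<in>S. p s)"
  define Y where "Y = (\<Sum>s\<in>S. p s * m s)"
  have "Z > 0" unfolding Z_def using assms by (intro sum_pos) auto
  have "(\<Sum>s\<in>S. p s * e s) \<le> (\<Sum>s\<in>S. p s * (D + b * m s - (b / 2)\<^sup>2))"
    using assms(3,4) by (intro sum_mono mult_left_mono) (auto simp: algebra_simps less_imp_le)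
  also have "\<dots> = D * Z + b * Y - (b / 2)\<^sup>2 * Z"
    by (simp add: Z_def Y_def algebra_simps sum.distrib sum_subtractf sum_distrib_left
        sum_distrib_right)
  finally have "(\<Sum>s\<in>S. p s * e s) * Z - Y\<^sup>2 \<le> (D * Z + b * Y - (b / 2)\<^sup>2 * Z) * Z - Y\<^sup>2"
    using \<open>Z > 0\<close> by (simp add: mult_right_mono)
  also have "\<dots> = D * Z\<^sup>2 - (Y - b / 2 * Z)\<^sup>2" by (simp add: power2_eq_square algebra_simps)
  also have "\<dots> \<le> D * Z\<^sup>2" by simp
  finally show ?thesis using \<open>Z > 0\<close> by (simp add: Z_def[symmetric] Y_def[symmetric] pos_divide_le_eq)
qed

section \<open>Eigenvalue bounds\<close>

lemma real_eigenvalues_eigenbasis: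
  assumes herm: "hermitian G" and T: "orthonormal_basis T"
    and eig: "\<And>t. t \<in> T \<Longrightarrow> G *v t = complex_of_real (gam t) *s t"
  shows "real_eigenvalues G = gam ` T"
proof
  show "real_eigenvalues G \<subseteq> gam ` T"
  proof
    fix l assume "l \<in> real_eigenvalues G"
    then obtain v where "v \<noteq> 0" and ev: "G *v v = complex_of_real l *s v"
      unfolding real_eigenvalues_def by blast
    then obtain t where "t \<in> T" and nz: "cinner t v \<noteq> 0"
      using vector_eq_on_basis[OF T, of v 0] by auto
    have "complex_of_real l * cinner t v = complex_of_real (gam t) * cinner t v"
      using cinner_eigenbasis_mult[OF T eig \<open>t \<in> T\<close>, of v] by (simp add: ev cinner_scale_right)
    thus "l \<in> gam ` T" using nz \<open>t \<in> T\<close> by simp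
  qed
  show "gam ` T \<subseteq> real_eigenvalues G"
  proof
    fix l assume "l \<in> gam ` T"
    then obtain t where "t \<in> T" "l = gam t" by blast
    moreover have "t \<noteq> 0" using orthonormal_basis_unit[OF T \<open>t \<in> T\<close>] by auto
    ultimately show "l \<in> real_eigenvalues G" unfolding real_eigenvalues_def using eig by blast
  qed
qed

lemma eigenbasis_eigenvalue_range:
  assumes "hermitian G" "orthonormal_basis T"
    and "\<And>t. t \<in> T \<Longrightarrow> G *v t = complex_of_real (gam t) *s t" and "t \<in> T"
  shows "lambda_min G \<le> gam t \<and> gam t \<le> lambda_max G"
  using real_eigenvalues_eigenbasis[OF assms(1-3)] orthonormal_basis_finite[OF assms(2)] assms(4)
  by (simp add: lambda_min_def lambda_max_def)

lemma spectral_spread_bound: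
  fixes G :: "complex^'n::finite^'n"
  assumes herm: "hermitian G" and "norm y = 1"
  shows "Re (cinner (G *v y) (G *v y)) - (lambda_max G + lambda_min G) * Re (cinner y (G *v y))
           + ((lambda_max G + lambda_min G) / 2)\<^sup>2 \<le> (lambda_max G - lambda_min G)\<^sup>2 / 4"
proof -
  obtain T gam where T: "orthonormal_basis T" and eig: "\<And>t. t \<in> T \<Longrightarrow> G *v t = complex_of_real (gam t) *s t"
    using hermitian_eigenbasisE[OF herm] by blast
  define c where "c = (lambda_max G + lambda_min G) / 2"
  define p where "p t = (cmod (cinner t y))\<^sup>2" for t
  have moment: "Re (cinner y (matpow G j *v y)) = (\<Sum>t\<in>T. gam t ^ j * p t)" for j
    by (simp add: cinner_matpow_eigenbasis[OF T eig] p_def Re_sum)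
  have "(lambda_max G - lambda_min G)\<^sup>2 / 4 - (g - c)\<^sup>2 = (g - lambda_min G) * (lambda_max G - g)"
    for g by (simp add: c_def power2_eq_square field_simps)
  hence "(gam t - c)\<^sup>2 \<le> (lambda_max G - lambda_min G)\<^sup>2 / 4" if "t \<in> T" for t
    using eigenbasis_eigenvalue_range[OF herm T eig that] by (smt (verit) mult_nonneg_nonneg)
  hence "(\<Sum>t\<in>T. p t * (gam t - c)\<^sup>2) \<le> (\<Sum>t\<in>T. p t * ((lambda_max G - lambda_min G)\<^sup>2 / 4))"
    by (intro sum_mono mult_left_mono) (auto simp: p_def)
  also have "\<dots> = (\<Sum>t\<in>T. p t) * ((lambda_max G - lambda_min G)\<^sup>2 / 4)"
    by (rule sum_distrib_right[symmetric])
  also have "\<dots> = (lambda_max G - lambda_min G)\<^sup>2 / 4"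
    using moment[of 0] \<open>norm y = 1\<close> by (simp add: cinner_self_eq_1_iff[symmetric])
  finally have spread: "(\<Sum>t\<in>T. p t * (gam t - c)\<^sup>2) \<le> (lambda_max G - lambda_min G)\<^sup>2 / 4" .
  have "(\<Sum>t\<in>T. p t * (gam t - c)\<^sup>2)
      = (\<Sum>t\<in>T. gam t ^ 2 * p t) - 2 * c * (\<Sum>t\<in>T. gam t ^ 1 * p t) + c\<^sup>2 * (\<Sum>t\<in>T. gam t ^ 0 * p t)"
    by (simp add: power2_diff sum.distrib sum_subtractf sum_distrib_left sum_distrib_right algebra_simps)
  also have "\<dots> = Re (cinner y (matpow G 2 *v y)) - 2 * c * Re (cinner y (matpow G 1 *v y))
      + c\<^sup>2 * Re (cinner y (matpow G 0 *v y))"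
    by (simp only: moment)
  also have "\<dots> = Re (cinner (G *v y) (G *v y)) - (lambda_max G + lambda_min G) * Re (cinner y (G *v y))
      + ((lambda_max G + lambda_min G) / 2)\<^sup>2"
    using \<open>norm y = 1\<close> matpow_two[of G]
    by (simp add: hermitian_cinner[OF herm] matrix_vector_mul_assoc cinner_self_eq_1_iff[symmetric] c_def)
  finally show ?thesis using spread by (simp only:)
qed

section \<open>The matrix logarithm of a positive definite matrix\<close>

definition outer :: "complex^'n::finite \<Rightarrow> complex^'n^'n" where
  "outer s = (\<chi> i j. s$i * cnj (s$j))"

lemma outer_mult_vector: "outer s *v x = cinner s x *s s"
  by (simp add: vec_eq_iff outer_def matrix_vector_mult_def cinner_def sum_distrib_left ac_simps)

lemma hermitian_sum_outer: "hermitian (\<Sum>s\<in>S. (f s :: real) *\<^sub>R outer s)"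
  unfolding hermitian_def adj_def by (simp add: vec_eq_iff sum_component outer_def mult.commute)

lemma sum_outer_eigenvector:
  assumes "orthonormal S" "t \<in> S"
  shows "(\<Sum>s\<in>S. (f s :: real) *\<^sub>R outer s) *v t = complex_of_real (f t) *s t"
proof -
  have "(\<Sum>s\<in>S. f s *\<^sub>R outer s) *v t = (\<Sum>s\<in>S. (complex_of_real (f s) * cinner s t) *s s)"
    by (simp add: linear_sum[OF bounded_linear.linear[OF bounded_linear_matrix_vector_mult_left]] o_def
        matrix_scaleR_vector_mult outer_mult_vector scaleR_eq_vector_scalar_mult vec_eq_iff)
  also have "\<dots> = (\<Sum>s\<in>S. (if s = t then complex_of_real (f t) else 0) *s s)"
    using assms by (intro sum.cong refl) (auto simp: orthonormal_def)
  also have "\<dots> = complex_of_real (f t) *s t"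
    using assms by (simp add: if_distrib[of "\<lambda>c. c *s _"] orthonormal_def cong: if_cong)
  finally show ?thesis .
qed

lemma psd_invertible_eigenvalue_pos:
  assumes "psd \<rho>" "invertible \<rho>" "norm s = 1" "\<rho> *v s = complex_of_real \<mu> *s s"
  shows "\<mu> > 0"
proof -
  have "cinner s (\<rho> *v s) = complex_of_real \<mu>"
    using assms(3,4) by (simp add: cinner_scale_right cinner_self_eq_1_iff[symmetric])
  moreover have "Re (cinner s (\<rho> *v s)) \<ge> 0" using assms(1) unfolding psd_def cinner_def by blast
  ultimately have "\<mu> \<ge> 0" by simp
  moreover have "\<mu> \<noteq> 0"
  proof
    assume "\<mu> = 0"
    obtain \<rho>' where "\<rho>' ** \<rho> = mat 1" using assms(2) unfolding invertible_def by blast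
    moreover have "\<rho> *v s = 0" using assms(4) \<open>\<mu> = 0\<close> by simp
    ultimately have "s = 0"
      by (metis matrix_vector_mul_assoc matrix_vector_mul_lid matrix_vector_mult_0_right)
    thus False using assms(3) by simp
  qed
  ultimately show ?thesis by simp
qed

lemma hermitian_log_exists:
  assumes "psd \<rho>" "invertible \<rho>"
  shows "\<exists>H. hermitian H \<and> mexp H = \<rho>"
proof -
  have herm: "hermitian \<rho>" using assms(1) by (simp add: psd_def)
  obtain S \<mu> where S: "orthonormal_basis S"
    and eig: "\<And>s. s \<in> S \<Longrightarrow> \<rho> *v s = complex_of_real (\<mu> s) *s s"
    using hermitian_eigenbasisE[OF herm] by blast
  define H where "H = (\<Sum>s\<in>S. ln (\<mu> s) *\<^sub>R outer s)"
  have "mexp H *v s = \<rho> *v s" if "s \<in> S" for s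
  proof -
    have "\<mu> s > 0"
      using psd_invertible_eigenvalue_pos[OF assms _ eig[OF that]] orthonormal_basis_unit[OF S that]
      by (simp add: cinner_self_eq_1_iff)
    thus ?thesis
      using mexp_eigenvector_real[OF sum_outer_eigenvector[OF orthonormal_basis_orthonormal[OF S] that,
            of "\<lambda>s. ln (\<mu> s)"]] eig[OF that]
      by (simp add: H_def)
  qed
  hence "mexp H = \<rho>" by (rule matrix_eq_on_basis[OF S])
  moreover have "hermitian H" unfolding H_def by (rule hermitian_sum_outer)
  ultimately show ?thesis by blast
qed

lemma hermitian_mexp_inj:
  assumes "hermitian H\<^sub>1" "hermitian H\<^sub>2" "mexp H\<^sub>1 = mexp H\<^sub>2"
  shows "H\<^sub>1 = H\<^sub>2"
proof -
  obtain S \<mu> where S: "orthonormal_basis S"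
    and eig\<^sub>1: "\<And>s. s \<in> S \<Longrightarrow> H\<^sub>1 *v s = complex_of_real (\<mu> s) *s s"
    using hermitian_eigenbasisE[OF assms(1)] by blast
  obtain T \<nu> where T: "orthonormal_basis T"
    and eig\<^sub>2: "\<And>t. t \<in> T \<Longrightarrow> H\<^sub>2 *v t = complex_of_real (\<nu> t) *s t"
    using hermitian_eigenbasisE[OF assms(2)] by blast
  have "H\<^sub>1 *v t = H\<^sub>2 *v t" if "t \<in> T" for t
  proof (rule vector_eq_on_basis[OF S])
    fix s assume "s \<in> S"
    have "complex_of_real (exp (\<mu> s)) * cinner s t = complex_of_real (exp (\<nu> t)) * cinner s t"
      using cinner_eigenbasis_mult[OF S mexp_eigenvector_real[OF eig\<^sub>1] \<open>s \<in> S\<close>, of t]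
        mexp_eigenvector_real[OF eig\<^sub>2[OF that]] assms(3)
      by (simp add: cinner_scale_right) metis
    hence "complex_of_real (\<mu> s) * cinner s t = complex_of_real (\<nu> t) * cinner s t"
      by (cases "cinner s t = 0") auto
    thus "cinner s (H\<^sub>1 *v t) = cinner s (H\<^sub>2 *v t)"
      by (simp add: cinner_eigenbasis_mult[OF S eig\<^sub>1 \<open>s \<in> S\<close>] eig\<^sub>2[OF that] cinner_scale_right)
  qed
  thus ?thesis by (rule matrix_eq_on_basis[OF T])
qed

lemma hermitian_mlog:
  assumes "psd \<rho>" "invertible \<rho>"
  shows "hermitian (mlog \<rho>)"
proof -
  have "\<exists>!H. hermitian H \<and> mexp H = \<rho>"
    using hermitian_log_exists[OF assms] hermitian_mexp_inj by blast
  thus ?thesis unfolding mlog_def by (rule theI'[THEN conjunct1])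
qed

lemma deriv_deriv_ln_Re_trace_mexp:
  fixes H X :: "complex^'n::finite^'n"
  defines "Z a \<equiv> Re (trace (mexp (H + a *\<^sub>R X)))"
  assumes "hermitian H" "hermitian X"
  shows "deriv (deriv (\<lambda>a. ln (Z a))) \<alpha>
           = ((\<Sum>k. Re (trace (X ** dmatpow (H + \<alpha> *\<^sub>R X) X k)) / fact k) * Z \<alpha>
              - (Re (trace (X ** mexp (H + \<alpha> *\<^sub>R X))))\<^sup>2) / (Z \<alpha>)\<^sup>2"
proof -
  define Z' where "Z' a = Re (trace (X ** mexp (H + a *\<^sub>R X)))" for a
  define Z'' where "Z'' a = (\<Sum>k. Re (trace (X ** dmatpow (H + a *\<^sub>R X) X k)) / fact k)" for a
  have "Z a > 0" for a
    unfolding Z_def using assms(2,3) by (intro Re_trace_mexp_pos hermitian_add hermitian_scaleR)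
  moreover have "(Z has_real_derivative Z' a) (at a)" for a
    unfolding Z_def Z'_def by (rule has_real_derivative_Re_trace_mexp)
  moreover have "(Z' has_real_derivative Z'' a) (at a)" for a
    unfolding Z'_def[abs_def] Z''_def by (rule has_real_derivative_Re_trace_mult_mexp)
  ultimately show ?thesis
    using deriv_deriv_ln[of Z Z' Z'' \<alpha>] by (simp add: Z'_def Z''_def power2_eq_square)
qed

lemma log_trace_mexp_second_deriv_le:
  fixes H G :: "complex^'n::finite^'n"
  assumes "hermitian H" "hermitian G"
  shows "deriv (deriv (\<lambda>a. ln (Re (trace (mexp (H - a *\<^sub>R G)))))) \<alpha>
           \<le> (lambda_max G - lambda_min G)\<^sup>2 / 4"
proof -
  define X where "X = - G"
  have "hermitian X" unfolding X_def by (rule hermitian_uminus[OF assms(2)])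
  obtain S lam where S: "orthonormal_basis S"
    and eig: "\<And>s. s \<in> S \<Longrightarrow> (H + \<alpha> *\<^sub>R X) *v s = complex_of_real (lam s) *s s"
    using hermitian_eigenbasisE assms(1) \<open>hermitian X\<close> hermitian_add hermitian_scaleR by metis
  define Z where "Z = (\<Sum>s\<in>S. exp (lam s))"
  define E where "E = (\<Sum>s\<in>S. exp (lam s) * Re (cinner (G *v s) (G *v s)))"
  define Y where "Y = (\<Sum>s\<in>S. exp (lam s) * Re (cinner s (G *v s)))"
  have "finite S" "S \<noteq> {}" using orthonormal_basis_finite[OF S] orthonormal_basis_nonempty[OF S] by auto
  hence "Z > 0" unfolding Z_def by (simp add: sum_pos)
  have "(\<lambda>a. ln (Re (trace (mexp (H - a *\<^sub>R G))))) = (\<lambda>a. ln (Re (trace (mexp (H + a *\<^sub>R X)))))"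
    by (simp add: X_def)
  moreover have "Re (trace (mexp (H + \<alpha> *\<^sub>R X))) = Z"
    unfolding Z_def by (rule Re_trace_mexp_eigenbasis[OF S eig])
  moreover have "Re (trace (X ** mexp (H + \<alpha> *\<^sub>R X))) = (\<Sum>s\<in>S. exp (lam s) * Re (cinner s (X *v s)))"
    by (rule Re_trace_mult_mexp_eigenbasis[OF S eig])
  hence "(Re (trace (X ** mexp (H + \<alpha> *\<^sub>R X))))\<^sup>2 = Y\<^sup>2"
    by (simp add: Y_def X_def matrix_vector_mult_uminus cinner_neg_right sum_negf)
  moreover have "(\<Sum>k. Re (trace (X ** dmatpow (H + \<alpha> *\<^sub>R X) X k)) / fact k) \<le> E"
    using suminf_Re_trace_mult_dmatpow_le[OF S eig \<open>hermitian X\<close>]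
    by (simp add: E_def X_def matrix_vector_mult_uminus cinner_neg_left cinner_neg_right)
  ultimately have "deriv (deriv (\<lambda>a. ln (Re (trace (mexp (H - a *\<^sub>R G)))))) \<alpha> \<le> (E * Z - Y\<^sup>2) / Z\<^sup>2"
    using deriv_deriv_ln_Re_trace_mexp[OF assms(1) \<open>hermitian X\<close>, of \<alpha>] \<open>Z > 0\<close>
    by (simp add: divide_right_mono mult_right_mono)
  also have "\<dots> \<le> (lambda_max G - lambda_min G)\<^sup>2 / 4"
    unfolding Z_def E_def Y_def using \<open>finite S\<close> \<open>S \<noteq> {}\<close>
  proof (intro weighted_variance_le)
    show "Re (cinner (G *v s) (G *v s)) - (lambda_max G + lambda_min G) * Re (cinner s (G *v s))
        + ((lambda_max G + lambda_min G) / 2)\<^sup>2 \<le> (lambda_max G - lambda_min G)\<^sup>2 / 4" if "s \<in> S" for s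
      using spectral_spread_bound[OF assms(2)] orthonormal_basis_unit[OF S that] cinner_self_eq_1_iff
      by blast
  qed auto
  finally show ?thesis .
qed

theorem corollary4:
  fixes f :: "complex^'n::finite^'n \<Rightarrow> real"
    and \<rho> G :: "complex^'n^'n"
  assumes f_convex: "convex_on {A. hermitian A} f"
    and rho_density: "\<rho> \<in> density"
    and rho_nonsingular: "invertible \<rho>"
    and G_hermitian: "hermitian G"
    and f_grad: "(f has_derivative (\<lambda>H. hs_inner G H)) (at \<rho> within {A. hermitian A})"
  shows "\<forall>\<alpha>::real.
           deriv (deriv (\<lambda>a. ln (Re (trace (mexp (mlog \<rho> - a *\<^sub>R G)))))) \<alpha>
             \<le> (lambda_max G - lambda_min G)\<^sup>2 / 4"
proof
  fix \<alpha> :: real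
  have "hermitian (mlog \<rho>)"
    using rho_density rho_nonsingular by (intro hermitian_mlog) (simp_all add: density_def)
  thus "deriv (deriv (\<lambda>a. ln (Re (trace (mexp (mlog \<rho> - a *\<^sub>R G)))))) \<alpha>
          \<le> (lambda_max G - lambda_min G)\<^sup>2 / 4"
    by (rule log_trace_mexp_second_deriv_le[OF _ G_hermitian])
qed

end
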